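(* Let $\varphi:\Lambda\to\Gamma$ be a regular covering map of finite simplicial graphs without isolated vertices, and let $v,v'$ be vertices of $\Gamma$ with $\mathrm{lk}(v)\subseteq\mathrm{st}(v')$. Then the transvection $T^{v'}_v$ of $A_\Gamma$ sending $v$ to $vv'$ and fixing all other vertices is liftable if and only if $v\lesssim_\varphi v'$.
   Context: Graphs are finite simplicial graphs; subgraphs are induced. $A_\Gamma$ is the right-angled Artin group with generators $V\Gamma$ and relations $[u,w]=1$ for edges $\{u,w\}$. $\mathrm{lk}(v)$ is induced by the neighbours of $v$, $\mathrm{st}(v)$ by $\mathrm{lk}(v)\cup\{v\}$. A covering map $\varphi:\Lambda\to\Gamma$ is a surjective simplicial map mapping the neighbours of each vertex $u$ bijectively onto the neighbours of $\varphi(u)$; regular means the group $\mathrm{Deck}(\varphi)$ of graph automorphisms $\mu$ of $\Lambda$ with $\varphi\mu=\varphi$ acts transitively on each fiber. $\phi:A_\Lambda\to A_\Gamma$ is induced by $\varphi$; $f\in\mathrm{Aut}(A_\Gamma)$ is liftable if there is $F\in\mathrm{Aut}(A_\Lambda)$ with $f\circ\phi=\phi\circ F$. For vertices $x,y$ of $\Gamma$, $x\lesssim_\varphi y$ means: for every $u\in\varphi^{-1}(x)$ there is $u'\in\varphi^{-1}(y)$ with $\mathrm{lk}(u)\subseteq\mathrm{st}(u')$. *)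

theory Defs
  imports "HOL-Algebra.Group" "HOL-Algebra.Coset"
begin

definition simplicial_graph :: "'a set \<Rightarrow> ('a \<times> 'a) set \<Rightarrow> bool" where
  "simplicial_graph V E \<longleftrightarrow> finite V \<and> E \<subseteq> V \<times> V \<and> sym E \<and> irrefl E"

definition no_isolated_vertices :: "'a set \<Rightarrow> ('a \<times> 'a) set \<Rightarrow> bool" where
  "no_isolated_vertices V E \<longleftrightarrow> (\<forall>v\<in>V. \<exists>u. (v, u) \<in> E)"

definition lk :: "('a \<times> 'a) set \<Rightarrow> 'a \<Rightarrow> 'a set" where
  "lk E v = {u. (v, u) \<in> E}"

definition st :: "('a \<times> 'a) set \<Rightarrow> 'a \<Rightarrow> 'a set" where
  "st E v = insert v (lk E v)"

definition covering_map ::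
  "'b set \<Rightarrow> ('b \<times> 'b) set \<Rightarrow> 'a set \<Rightarrow> ('a \<times> 'a) set \<Rightarrow> ('b \<Rightarrow> 'a) \<Rightarrow> bool" where
  "covering_map VL EL VG EG \<phi> \<longleftrightarrow>
     \<phi> ` VL = VG \<and>
     (\<forall>u w. (u, w) \<in> EL \<longrightarrow> (\<phi> u, \<phi> w) \<in> EG) \<and>
     (\<forall>u\<in>VL. bij_betw \<phi> (lk EL u) (lk EG (\<phi> u)))"

definition deck ::
  "'b set \<Rightarrow> ('b \<times> 'b) set \<Rightarrow> ('b \<Rightarrow> 'a) \<Rightarrow> ('b \<Rightarrow> 'b) set" where
  "deck VL EL \<phi> = {\<mu>. bij_betw \<mu> VL VL \<and>
      (\<forall>x\<in>VL. \<forall>y\<in>VL. (x, y) \<in> EL \<longleftrightarrow> (\<mu> x, \<mu> y) \<in> EL) \<and>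
      (\<forall>x\<in>VL. \<phi> (\<mu> x) = \<phi> x)}"

definition regular_covering_map ::
  "'b set \<Rightarrow> ('b \<times> 'b) set \<Rightarrow> 'a set \<Rightarrow> ('a \<times> 'a) set \<Rightarrow> ('b \<Rightarrow> 'a) \<Rightarrow> bool" where
  "regular_covering_map VL EL VG EG \<phi> \<longleftrightarrow>
     covering_map VL EL VG EG \<phi> \<and>
     (\<forall>u\<in>VL. \<forall>u'\<in>VL. \<phi> u = \<phi> u' \<longrightarrow> (\<exists>\<mu>\<in>deck VL EL \<phi>. \<mu> u = u'))"

definition phi_le ::
  "'b set \<Rightarrow> ('b \<times> 'b) set \<Rightarrow> ('b \<Rightarrow> 'a) \<Rightarrow> 'a \<Rightarrow> 'a \<Rightarrow> bool" where
  "phi_le VL EL \<phi> x y \<longleftrightarrow>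
     (\<forall>u\<in>VL. \<phi> u = x \<longrightarrow> (\<exists>u'\<in>VL. \<phi> u' = y \<and> lk EL u \<subseteq> st EL u'))"

text \<open>Words: lists of letters (vertex, sign); sign True means the generator,
False its inverse.\<close>
type_synonym 'a word = "('a \<times> bool) list"

inductive raag_eq :: "'a set \<Rightarrow> ('a \<times> 'a) set \<Rightarrow> 'a word \<Rightarrow> 'a word \<Rightarrow> bool"
  for V E where
  refl: "w \<in> lists (V \<times> UNIV) \<Longrightarrow> raag_eq V E w w"
| sym: "raag_eq V E w w' \<Longrightarrow> raag_eq V E w' w"
| trans: "raag_eq V E w w' \<Longrightarrow> raag_eq V E w' w'' \<Longrightarrow> raag_eq V E w w''"
| cancel: "xs \<in> lists (V \<times> UNIV) \<Longrightarrow> ys \<in> lists (V \<times> UNIV) \<Longrightarrow> a \<in> V \<Longrightarrow>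
     raag_eq V E (xs @ [(a, s), (a, \<not> s)] @ ys) (xs @ ys)"
| commute: "xs \<in> lists (V \<times> UNIV) \<Longrightarrow> ys \<in> lists (V \<times> UNIV) \<Longrightarrow> (a, c) \<in> E \<Longrightarrow>
     a \<in> V \<Longrightarrow> c \<in> V \<Longrightarrow>
     raag_eq V E (xs @ [(a, s), (c, t)] @ ys) (xs @ [(c, t), (a, s)] @ ys)"

definition raag_rel :: "'a set \<Rightarrow> ('a \<times> 'a) set \<Rightarrow> ('a word \<times> 'a word) set" where
  "raag_rel V E = {(w, w'). raag_eq V E w w'}"

definition raag_class :: "'a set \<Rightarrow> ('a \<times> 'a) set \<Rightarrow> 'a word \<Rightarrow> 'a word set" where
  "raag_class V E w = raag_rel V E `` {w}"

definition rep :: "'a word set \<Rightarrow> 'a word" where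
  "rep X = (SOME w. w \<in> X)"

definition raag :: "'a set \<Rightarrow> ('a \<times> 'a) set \<Rightarrow> 'a word set monoid" where
  "raag V E = \<lparr> carrier = lists (V \<times> UNIV) // raag_rel V E,
                mult = (\<lambda>X Y. raag_class V E (rep X @ rep Y)),
                one = raag_class V E [] \<rparr>"

definition induced_hom ::
  "'a set \<Rightarrow> ('a \<times> 'a) set \<Rightarrow> ('b \<Rightarrow> 'a) \<Rightarrow> 'b word set \<Rightarrow> 'a word set" where
  "induced_hom VG EG \<phi> X = raag_class VG EG (map (\<lambda>(a, s). (\<phi> a, s)) (rep X))"

definition transvection ::
  "'a set \<Rightarrow> ('a \<times> 'a) set \<Rightarrow> 'a \<Rightarrow> 'a \<Rightarrow> 'a word set \<Rightarrow> 'a word set" where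
  "transvection V E v v' X = raag_class V E
     (concat (map (\<lambda>(a, s). if a = v then
                              (if s then [(v, True), (v', True)] else [(v', False), (v, False)])
                            else [(a, s)]) (rep X)))"

definition liftable ::
  "'b set \<Rightarrow> ('b \<times> 'b) set \<Rightarrow> 'a set \<Rightarrow> ('a \<times> 'a) set \<Rightarrow> ('b \<Rightarrow> 'a)
   \<Rightarrow> ('a word set \<Rightarrow> 'a word set) \<Rightarrow> bool" where
  "liftable VL EL VG EG \<phi> f \<longleftrightarrow>
     (\<exists>F \<in> iso (raag VL EL) (raag VL EL).
        \<forall>X \<in> carrier (raag VL EL). f (induced_hom VG EG \<phi> X) = induced_hom VG EG \<phi> (F X))"

end

(*
  A lift F of the transvection v -> v v' is detected by exponent sums. Fix u over v. The
  exponent vector x of F(u) sums to 1 over the fibres of v and of v', and for every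
  neighbour w of u the exponent vector y of F(w) sums to 1 over the fibre of the image of w
  and to 0 over every other fibre. Since F(u) and F(w) commute, x a * y b = y a * x b for
  all distinct non-adjacent a, b: for non-adjacent a and b, the signed number of
  occurrences of a before b in a word is invariant under the relations. Choosing u0 over v
  and u1 over v' with x u0, x u1 nonzero, this forces y to be supported in lk(u0) and then
  every vertex of lk(u0) into st(u1); deck transformations move u0 to any vertex over v.

  Conversely, if every u over v has some g(u) over v' with lk(u) in st(g(u)), then
  u -> u g(u) (all other generators fixed) extends to an automorphism of the Artin group
  of the cover, with inverse u -> u g(u)^-1, and it lifts the transvection.
*)

theory Submission
  imports Defs
begin

definition word_inv :: "'a word \<Rightarrow> 'a word" where
  "word_inv w = rev (map (\<lambda>(a, s). (a, \<not> s)) w)"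

lemma word_inv_simps [simp]:
  "word_inv [] = []"
  "word_inv (l # w) = word_inv w @ [(fst l, \<not> snd l)]"
  "word_inv (xs @ ys) = word_inv ys @ word_inv xs"
  "word_inv (word_inv w) = w"
  by (auto simp: word_inv_def case_prod_beta rev_map[symmetric] comp_def)

lemma word_inv_in_lists_iff [simp]: "word_inv w \<in> lists (V \<times> UNIV) \<longleftrightarrow> w \<in> lists (V \<times> UNIV)"
  by (auto simp: word_inv_def)

lemma fst_set_word_inv [simp]: "fst ` set (word_inv w) = fst ` set w"
  by (force simp: word_inv_def image_iff)

declare raag_eq.trans [trans]

lemma raag_eq_lists: "raag_eq V E w w' \<Longrightarrow> w \<in> lists (V \<times> UNIV) \<and> w' \<in> lists (V \<times> UNIV)"
  by (induction rule: raag_eq.induct) auto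

lemma raag_eq_refl_iff [simp]: "raag_eq V E w w \<longleftrightarrow> w \<in> lists (V \<times> UNIV)"
  using raag_eq.refl raag_eq_lists by blast

lemma raag_eq_append_context:
  assumes "raag_eq V E w w'" "xs \<in> lists (V \<times> UNIV)" "ys \<in> lists (V \<times> UNIV)"
  shows "raag_eq V E (xs @ w @ ys) (xs @ w' @ ys)"
  using assms
proof (induction rule: raag_eq.induct)
  case (cancel as bs a s)
  have "raag_eq V E ((xs @ as) @ [(a, s), (a, \<not> s)] @ (bs @ ys)) ((xs @ as) @ (bs @ ys))"
    by (rule raag_eq.cancel) (use cancel in auto)
  then show ?case by simp
next
  case (commute as bs a c s t)
  have "raag_eq V E ((xs @ as) @ [(a, s), (c, t)] @ (bs @ ys)) ((xs @ as) @ [(c, t), (a, s)] @ (bs @ ys))"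
    by (rule raag_eq.commute) (use commute in auto)
  then show ?case by simp
next
  case (sym w w')
  then show ?case by (blast intro: raag_eq.sym)
next
  case (trans w w' w'')
  then show ?case by (blast intro: raag_eq.trans)
qed simp

lemma raag_eq_append:
  assumes "raag_eq V E w w'" "raag_eq V E u u'"
  shows "raag_eq V E (w @ u) (w' @ u')"
proof -
  have "raag_eq V E (w @ u) (w' @ u)"
    using raag_eq_append_context[OF assms(1), of "[]" u] raag_eq_lists[OF assms(2)] by simp
  also have "raag_eq V E (w' @ u) (w' @ u')"
    using raag_eq_append_context[OF assms(2), of w' "[]"] raag_eq_lists[OF assms(1)] by simp
  finally show ?thesis .
qed

lemma raag_eq_cancel_letter: "a \<in> V \<Longrightarrow> raag_eq V E [(a, s), (a, \<not> s)] []"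
  using raag_eq.cancel[of "[]" V "[]" a E s] by simp

lemma raag_eq_cancel_word_inv: "w \<in> lists (V \<times> UNIV) \<Longrightarrow> raag_eq V E (w @ word_inv w) []"
proof (induction w)
  case (Cons l w)
  obtain a s where l: "l = (a, s)" by fastforce
  have "raag_eq V E ([l] @ (w @ word_inv w) @ [(a, \<not> s)]) ([l] @ [] @ [(a, \<not> s)])"
    using Cons l by (intro raag_eq_append_context) auto
  also have "raag_eq V E ([l] @ [] @ [(a, \<not> s)]) []"
    using Cons.prems l raag_eq_cancel_letter by fastforce
  finally show ?case using l by simp
qed simp

lemma raag_eq_word_inv: "raag_eq V E w w' \<Longrightarrow> raag_eq V E (word_inv w) (word_inv w')"
proof (induction rule: raag_eq.induct)
  case (cancel xs ys a s)
  then show ?case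
    using raag_eq.cancel[of "word_inv ys" V "word_inv xs" a E s] by simp
next
  case (commute xs ys a c s t)
  then show ?case
    using raag_eq.commute[of "word_inv ys" V "word_inv xs" a c E "\<not> s" "\<not> t"]
    by (simp add: raag_eq.sym)
next
  case (sym w w')
  then show ?case by (blast intro: raag_eq.sym)
next
  case (trans w w' w'')
  then show ?case by (blast intro: raag_eq.trans)
qed simp

definition commuting_sets :: "('a \<times> 'a) set \<Rightarrow> 'a set \<Rightarrow> 'a set \<Rightarrow> bool" where
  "commuting_sets E A B \<longleftrightarrow> (\<forall>a\<in>A. \<forall>b\<in>B. a = b \<or> (a, b) \<in> E)"

lemma raag_eq_swap_letters:
  assumes "a \<in> V" "c \<in> V" "a = c \<or> (a, c) \<in> E"
  shows "raag_eq V E [(a, s), (c, t)] [(c, t), (a, s)]"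
proof (cases "a = c \<and> t = (\<not> s)")
  case True
  have "raag_eq V E [(a, s), (a, \<not> s)] []" "raag_eq V E [(a, \<not> s), (a, s)] []"
    using raag_eq_cancel_letter[OF assms(1), of E s] raag_eq_cancel_letter[OF assms(1), of E "\<not> s"]
    by simp_all
  then show ?thesis
    using True raag_eq.trans raag_eq.sym by blast
next
  case False
  then show ?thesis
    using assms raag_eq.commute[of "[]" V "[]" a c E s t] by auto
qed

lemma raag_eq_swap_letter_word:
  assumes "fst l \<in> V" "q \<in> lists (V \<times> UNIV)" "commuting_sets E {fst l} (fst ` set q)"
  shows "raag_eq V E (l # q) (q @ [l])"
  using assms(2,3)
proof (induction q)
  case (Cons m q)
  have "fst m \<in> V" "fst l = fst m \<or> (fst l, fst m) \<in> E"
    using Cons by (auto simp: commuting_sets_def mem_Times_iff)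
  then have lm: "raag_eq V E [l, m] [m, l]"
    using assms(1) raag_eq_swap_letters[of "fst l" V "fst m" E "snd l" "snd m"] by simp
  have "raag_eq V E (l # m # q) (m # l # q)"
    using raag_eq_append[OF lm, of q q] Cons by simp
  also have "raag_eq V E (m # l # q) (m # q @ [l])"
    using Cons raag_eq_append[of V E "[m]" "[m]" "l # q" "q @ [l]"]
    by (auto simp: commuting_sets_def mem_Times_iff)
  finally show ?case by simp
qed (use assms(1) in \<open>auto simp: mem_Times_iff\<close>)

lemma raag_eq_swap_words:
  assumes "p \<in> lists (V \<times> UNIV)" "q \<in> lists (V \<times> UNIV)"
    and "commuting_sets E (fst ` set p) (fst ` set q)"
  shows "raag_eq V E (p @ q) (q @ p)"
  using assms
proof (induction p)
  case (Cons l p)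
  have swap: "raag_eq V E (l # q) (q @ [l])"
    using Cons by (intro raag_eq_swap_letter_word) (auto simp: commuting_sets_def mem_Times_iff)
  have "raag_eq V E (l # p @ q) (l # q @ p)"
    using Cons raag_eq_append[of V E "[l]" "[l]" "p @ q" "q @ p"]
    by (auto simp: commuting_sets_def mem_Times_iff)
  also have "raag_eq V E (l # q @ p) (q @ l # p)"
    using Cons raag_eq_append[OF swap, of p p] by auto
  finally show ?case by simp
qed simp

section \<open>Substitutions\<close>

definition subst_letter :: "('b \<Rightarrow> 'a word) \<Rightarrow> 'b \<times> bool \<Rightarrow> 'a word" where
  "subst_letter \<sigma> l = (if snd l then \<sigma> (fst l) else word_inv (\<sigma> (fst l)))"

definition subst_word :: "('b \<Rightarrow> 'a word) \<Rightarrow> 'b word \<Rightarrow> 'a word" where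
  "subst_word \<sigma> w = concat (map (subst_letter \<sigma>) w)"

lemma subst_word_simps [simp]:
  "subst_word \<sigma> [] = []"
  "subst_word \<sigma> (l # w) = subst_letter \<sigma> l @ subst_word \<sigma> w"
  "subst_word \<sigma> (xs @ ys) = subst_word \<sigma> xs @ subst_word \<sigma> ys"
  by (auto simp: subst_word_def)

lemma fst_set_subst_letter [simp]: "fst ` set (subst_letter \<sigma> l) = fst ` set (\<sigma> (fst l))"
  by (simp add: subst_letter_def)

lemma subst_word_word_inv: "subst_word \<sigma> (word_inv w) = word_inv (subst_word \<sigma> w)"
  by (induction w) (auto simp: subst_letter_def)

lemma subst_word_subst_word: "subst_word \<tau> (subst_word \<sigma> w) = subst_word (\<lambda>a. subst_word \<tau> (\<sigma> a)) w"
  by (induction w) (auto simp: subst_letter_def subst_word_word_inv)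

lemma subst_word_cong: "(\<And>a. a \<in> fst ` set w \<Longrightarrow> \<sigma> a = \<sigma>' a) \<Longrightarrow> subst_word \<sigma> w = subst_word \<sigma>' w"
  by (induction w) (auto simp: subst_letter_def)

lemma subst_word_lists:
  assumes "\<And>a. a \<in> V \<Longrightarrow> \<sigma> a \<in> lists (V' \<times> UNIV)" "w \<in> lists (V \<times> UNIV)"
  shows "subst_word \<sigma> w \<in> lists (V' \<times> UNIV)"
  using assms(2)
proof induction
  case (Cons l w)
  then show ?case
    using assms(1)[of "fst l"] by (auto simp: subst_letter_def mem_Times_iff simp del: in_listsI)
qed simp

lemma raag_eq_subst_word_id:
  assumes "\<And>a. a \<in> V \<Longrightarrow> raag_eq V E (\<sigma> a) [(a, True)]" "w \<in> lists (V \<times> UNIV)"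
  shows "raag_eq V E (subst_word \<sigma> w) w"
  using assms(2)
proof induction
  case (Cons l w)
  have "raag_eq V E (subst_letter \<sigma> l) [l]"
    using Cons raag_eq_word_inv[OF assms(1)[of "fst l"]]
    by (cases l) (auto simp: subst_letter_def assms(1))
  then show ?case
    using raag_eq_append[of V E "subst_letter \<sigma> l" "[l]"] Cons by simp
qed simp

locale raag_substitution =
  fixes V :: "'b set" and E :: "('b \<times> 'b) set"
    and V' :: "'a set" and E' :: "('a \<times> 'a) set" and \<sigma> :: "'b \<Rightarrow> 'a word"
  assumes subst_in_lists: "a \<in> V \<Longrightarrow> \<sigma> a \<in> lists (V' \<times> UNIV)"
    and subst_commute: "(a, c) \<in> E \<Longrightarrow> a \<in> V \<Longrightarrow> c \<in> V \<Longrightarrow>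
      commuting_sets E' (fst ` set (\<sigma> a)) (fst ` set (\<sigma> c))"
begin

lemma subst_letter_lists: "fst l \<in> V \<Longrightarrow> subst_letter \<sigma> l \<in> lists (V' \<times> UNIV)"
  by (auto simp: subst_letter_def subst_in_lists simp del: in_listsI)

lemma subst_word_in_lists: "w \<in> lists (V \<times> UNIV) \<Longrightarrow> subst_word \<sigma> w \<in> lists (V' \<times> UNIV)"
  using subst_word_lists subst_in_lists by blast

lemma raag_eq_subst_word: "raag_eq V E w w' \<Longrightarrow> raag_eq V' E' (subst_word \<sigma> w) (subst_word \<sigma> w')"
proof (induction rule: raag_eq.induct)
  case (refl w)
  then show ?case using subst_word_in_lists by simp
next
  case (cancel xs ys a s)
  have "raag_eq V' E' (subst_word \<sigma> [(a, s), (a, \<not> s)]) []"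
    using raag_eq_cancel_word_inv[of "\<sigma> a" V' E'] raag_eq_cancel_word_inv[of "word_inv (\<sigma> a)" V' E']
      subst_in_lists cancel by (cases s) (auto simp: subst_letter_def)
  then have "raag_eq V' E' (subst_word \<sigma> xs @ subst_word \<sigma> [(a, s), (a, \<not> s)] @ subst_word \<sigma> ys)
      (subst_word \<sigma> xs @ [] @ subst_word \<sigma> ys)"
    by (rule raag_eq_append_context[OF _ subst_word_in_lists subst_word_in_lists]) (use cancel in auto)
  then show ?case by simp
next
  case (commute xs ys a c s t)
  have "raag_eq V' E' (subst_letter \<sigma> (a, s) @ subst_letter \<sigma> (c, t)) (subst_letter \<sigma> (c, t) @ subst_letter \<sigma> (a, s))"
    using commute subst_commute[of a c]
    by (intro raag_eq_swap_words subst_letter_lists) auto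
  then have "raag_eq V' E' (subst_word \<sigma> xs @ (subst_letter \<sigma> (a, s) @ subst_letter \<sigma> (c, t)) @ subst_word \<sigma> ys)
      (subst_word \<sigma> xs @ (subst_letter \<sigma> (c, t) @ subst_letter \<sigma> (a, s)) @ subst_word \<sigma> ys)"
    by (rule raag_eq_append_context[OF _ subst_word_in_lists subst_word_in_lists]) (use commute in auto)
  then show ?case by simp
next
  case (sym w w')
  then show ?case by (blast intro: raag_eq.sym)
next
  case (trans w w' w'')
  then show ?case by (blast intro: raag_eq.trans)
qed

end

lemma mem_raag_class_iff [simp]: "w' \<in> raag_class V E w \<longleftrightarrow> raag_eq V E w w'"
  by (simp add: raag_class_def raag_rel_def)

lemma raag_class_eq:
  assumes "raag_eq V E w w'"
  shows "raag_class V E w = raag_class V E w'"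
  using raag_eq.trans[OF assms] raag_eq.trans[OF raag_eq.sym[OF assms]] by auto

lemma raag_class_eq_iff:
  assumes "w \<in> lists (V \<times> UNIV)"
  shows "raag_class V E w = raag_class V E w' \<longleftrightarrow> raag_eq V E w w'"
proof
  assume "raag_class V E w = raag_class V E w'"
  then have "w \<in> raag_class V E w'"
    using assms by (metis mem_raag_class_iff raag_eq_refl_iff)
  then show "raag_eq V E w w'"
    by (simp add: raag_eq.sym)
qed (rule raag_class_eq)

lemma raag_eq_rep_raag_class: "w \<in> lists (V \<times> UNIV) \<Longrightarrow> raag_eq V E w (rep (raag_class V E w))"
  using someI[of "\<lambda>w'. w' \<in> raag_class V E w" w] by (simp add: rep_def)

lemma carrier_raag: "carrier (raag V E) = {raag_class V E w | w. w \<in> lists (V \<times> UNIV)}"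
  by (auto simp: raag_def quotient_def raag_class_def)

lemma raag_class_in_carrier: "w \<in> lists (V \<times> UNIV) \<Longrightarrow> raag_class V E w \<in> carrier (raag V E)"
  unfolding carrier_raag by blast

lemma
  assumes "X \<in> carrier (raag V E)"
  shows rep_in_lists: "rep X \<in> lists (V \<times> UNIV)"
    and raag_class_rep: "raag_class V E (rep X) = X"
proof -
  obtain w where w: "w \<in> lists (V \<times> UNIV)" "X = raag_class V E w"
    using assms by (auto simp: carrier_raag)
  then have r: "raag_eq V E w (rep X)"
    using raag_eq_rep_raag_class by blast
  show "rep X \<in> lists (V \<times> UNIV)"
    using raag_eq_lists[OF r] by blast
  show "raag_class V E (rep X) = X"
    using raag_class_eq[OF r] w(2) by simp
qed

lemma raag_mult_class:
  assumes "w \<in> lists (V \<times> UNIV)" "w' \<in> lists (V \<times> UNIV)"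
  shows "raag_class V E w \<otimes>\<^bsub>raag V E\<^esub> raag_class V E w' = raag_class V E (w @ w')"
proof -
  have "raag_eq V E (rep (raag_class V E w) @ rep (raag_class V E w')) (w @ w')"
    using raag_eq_append[OF raag_eq_rep_raag_class[OF assms(1)] raag_eq_rep_raag_class[OF assms(2)]]
    by (rule raag_eq.sym)
  from raag_class_eq[OF this] show ?thesis
    by (simp add: raag_def)
qed

lemma raag_generators_commute:
  assumes "(a, b) \<in> E" "a \<in> V" "b \<in> V"
  shows "raag_class V E [(a, True)] \<otimes>\<^bsub>raag V E\<^esub> raag_class V E [(b, True)] =
    raag_class V E [(b, True)] \<otimes>\<^bsub>raag V E\<^esub> raag_class V E [(a, True)]"
proof -
  have "raag_eq V E [(a, True), (b, True)] [(b, True), (a, True)]"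
    using assms raag_eq.commute[of "[]" V "[]" a b E True True] by simp
  then show ?thesis
    using assms(2,3) by (simp add: raag_mult_class raag_class_eq[OF \<open>raag_eq V E _ _\<close>])
qed

definition subst_hom :: "'a set \<Rightarrow> ('a \<times> 'a) set \<Rightarrow> ('b \<Rightarrow> 'a word) \<Rightarrow> 'b word set \<Rightarrow> 'a word set" where
  "subst_hom V' E' \<sigma> X = raag_class V' E' (subst_word \<sigma> (rep X))"

context raag_substitution
begin

lemma subst_hom_raag_class:
  assumes "w \<in> lists (V \<times> UNIV)"
  shows "subst_hom V' E' \<sigma> (raag_class V E w) = raag_class V' E' (subst_word \<sigma> w)"
  unfolding subst_hom_def
  using raag_class_eq[OF raag_eq.sym[OF raag_eq_subst_word[OF raag_eq_rep_raag_class[OF assms]]]] .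

lemma subst_hom_in_carrier: "X \<in> carrier (raag V E) \<Longrightarrow> subst_hom V' E' \<sigma> X \<in> carrier (raag V' E')"
  unfolding subst_hom_def by (intro raag_class_in_carrier subst_word_in_lists rep_in_lists)

lemma subst_hom_hom: "subst_hom V' E' \<sigma> \<in> hom (raag V E) (raag V' E')"
proof (rule homI)
  fix X Y
  assume "X \<in> carrier (raag V E)" "Y \<in> carrier (raag V E)"
  then obtain x y where "x \<in> lists (V \<times> UNIV)" "X = raag_class V E x"
    and "y \<in> lists (V \<times> UNIV)" "Y = raag_class V E y"
    unfolding carrier_raag by blast
  then show "subst_hom V' E' \<sigma> (X \<otimes>\<^bsub>raag V E\<^esub> Y) = subst_hom V' E' \<sigma> X \<otimes>\<^bsub>raag V' E'\<^esub> subst_hom V' E' \<sigma> Y"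
    by (simp add: raag_mult_class subst_hom_raag_class subst_word_in_lists)
qed (rule subst_hom_in_carrier)

lemma subst_hom_generator:
  "a \<in> V \<Longrightarrow> subst_hom V' E' \<sigma> (raag_class V E [(a, True)]) = raag_class V' E' (\<sigma> a)"
  by (simp add: subst_hom_raag_class subst_letter_def)

end

lemma subst_hom_subst_hom:
  assumes "raag_substitution V' E' V'' E'' \<tau>" "X \<in> carrier (raag V E)"
    and "\<And>a. a \<in> V \<Longrightarrow> \<sigma> a \<in> lists (V' \<times> UNIV)"
  shows "subst_hom V'' E'' \<tau> (subst_hom V' E' \<sigma> X) = subst_hom V'' E'' (\<lambda>a. subst_word \<tau> (\<sigma> a)) X"
  using raag_substitution.subst_hom_raag_class[OF assms(1) subst_word_lists[OF assms(3) rep_in_lists[OF assms(2)]]]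
  by (simp add: subst_hom_def subst_word_subst_word)

lemma subst_hom_cong:
  assumes "X \<in> carrier (raag V E)" "\<And>a. a \<in> V \<Longrightarrow> \<sigma> a = \<sigma>' a"
  shows "subst_hom V' E' \<sigma> X = subst_hom V' E' \<sigma>' X"
  using rep_in_lists[OF assms(1)] assms(2)
  by (auto simp: subst_hom_def mem_Times_iff intro!: arg_cong[where f = "raag_class V' E'"] subst_word_cong)

lemma subst_hom_id:
  assumes "X \<in> carrier (raag V E)" "\<And>a. a \<in> V \<Longrightarrow> raag_eq V E (\<sigma> a) [(a, True)]"
  shows "subst_hom V E \<sigma> X = X"
  using raag_class_eq[OF raag_eq_subst_word_id[OF assms(2) rep_in_lists[OF assms(1)]]]
  by (simp add: subst_hom_def raag_class_rep[OF assms(1)])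

lemma subst_hom_iso:
  assumes \<sigma>: "raag_substitution V E V E \<sigma>" and \<sigma>': "raag_substitution V E V E \<sigma>'"
    and "\<And>a. a \<in> V \<Longrightarrow> raag_eq V E (subst_word \<sigma>' (\<sigma> a)) [(a, True)]"
    and "\<And>a. a \<in> V \<Longrightarrow> raag_eq V E (subst_word \<sigma> (\<sigma>' a)) [(a, True)]"
  shows "subst_hom V E \<sigma> \<in> iso (raag V E) (raag V E)"
proof -
  have "subst_hom V E \<sigma>' (subst_hom V E \<sigma> X) = X" if "X \<in> carrier (raag V E)" for X
    using subst_hom_subst_hom[OF \<sigma>' that raag_substitution.subst_in_lists[OF \<sigma>]]
      subst_hom_id[OF that assms(3)] by simp
  moreover have "subst_hom V E \<sigma> (subst_hom V E \<sigma>' X) = X" if "X \<in> carrier (raag V E)" for X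
    using subst_hom_subst_hom[OF \<sigma> that raag_substitution.subst_in_lists[OF \<sigma>']]
      subst_hom_id[OF that assms(4)] by simp
  ultimately have "bij_betw (subst_hom V E \<sigma>) (carrier (raag V E)) (carrier (raag V E))"
    by (intro bij_betw_byWitness[where f' = "subst_hom V E \<sigma>'"])
      (auto intro: raag_substitution.subst_hom_in_carrier[OF \<sigma>] raag_substitution.subst_hom_in_carrier[OF \<sigma>'])
  then show ?thesis
    by (simp add: iso_def raag_substitution.subst_hom_hom[OF \<sigma>])
qed

lemma induced_hom_eq_subst_hom:
  fixes \<phi> :: "'b \<Rightarrow> 'a"
  shows "induced_hom V E \<phi> = subst_hom V E (\<lambda>a. [(\<phi> a, True)])"
proof -
  have "map (\<lambda>(a, s). (\<phi> a, s)) w = subst_word (\<lambda>a. [(\<phi> a, True)]) w" for w :: "'b word"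
    by (induction w) (auto simp: subst_letter_def)
  then show ?thesis
    by (simp add: fun_eq_iff induced_hom_def subst_hom_def)
qed

lemma raag_substitution_graph_hom:
  assumes "\<phi> ` V \<subseteq> V'" "\<And>a c. (a, c) \<in> E \<Longrightarrow> (\<phi> a, \<phi> c) \<in> E'"
  shows "raag_substitution V E V' E' (\<lambda>a. [(\<phi> a, True)])"
  using assms by unfold_locales (auto simp: commuting_sets_def)

text \<open>The product of the pairwise commuting transvections \<open>a \<mapsto> a (g a)\<^sup>\<plusminus>\<^sup>1\<close>, \<open>a \<in> U\<close>.\<close>
definition multi_transvection :: "'a set \<Rightarrow> ('a \<Rightarrow> 'a) \<Rightarrow> bool \<Rightarrow> 'a \<Rightarrow> 'a word" where
  "multi_transvection U g s a = (if a \<in> U then [(a, True), (g a, s)] else [(a, True)])"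

lemma transvection_eq_subst_hom:
  "transvection V E v v' = subst_hom V E (multi_transvection {v} (\<lambda>_. v') True)"
proof -
  have "concat (map (\<lambda>(a, s). if a = v then
                              (if s then [(v, True), (v', True)] else [(v', False), (v, False)])
                            else [(a, s)]) w) = subst_word (multi_transvection {v} (\<lambda>_. v') True) w" for w
    by (induction w) (auto simp: subst_letter_def multi_transvection_def)
  then show ?thesis
    by (simp add: fun_eq_iff transvection_def subst_hom_def)
qed

lemma raag_substitution_multi_transvection:
  assumes "sym E" "U \<subseteq> V" "g ` U \<subseteq> V"
    and "\<And>a b. a \<in> U \<Longrightarrow> b \<in> U \<Longrightarrow> (a, b) \<notin> E"
    and "\<And>a. a \<in> U \<Longrightarrow> lk E a \<subseteq> st E (g a)"
  shows "raag_substitution V E V E (multi_transvection U g s)"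
proof
  fix a c
  assume ac: "(a, c) \<in> E" "a \<in> V" "c \<in> V"
  have "c = g a \<or> (g a, c) \<in> E" if "a \<in> U"
    using ac(1) assms(5)[OF that] by (auto simp: lk_def st_def)
  moreover have "a = g c \<or> (a, g c) \<in> E" if "c \<in> U"
    using symD[OF assms(1) ac(1)] assms(5)[OF that] symD[OF assms(1)] by (auto simp: lk_def st_def)
  ultimately show "commuting_sets E (fst ` set (multi_transvection U g s a))
      (fst ` set (multi_transvection U g s c))"
    using ac assms(4)[of a c] by (auto simp: commuting_sets_def multi_transvection_def)
qed (use assms in \<open>auto simp: multi_transvection_def\<close>)

lemma raag_eq_multi_transvection_inverse:
  assumes "U \<subseteq> V" "g ` U \<subseteq> V" "\<And>a. a \<in> U \<Longrightarrow> g a \<notin> U" "a \<in> V"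
  shows "raag_eq V E (subst_word (multi_transvection U g (\<not> s)) (multi_transvection U g s a)) [(a, True)]"
proof (cases "a \<in> U")
  case True
  then have cancel: "raag_eq V E [(g a, \<not> s), (g a, \<not> \<not> s)] []"
    using assms(2) by (intro raag_eq_cancel_letter) auto
  have "raag_eq V E ([(a, True)] @ [(g a, \<not> s), (g a, \<not> \<not> s)]) ([(a, True)] @ [])"
    using assms(4) by (intro raag_eq_append[OF _ cancel]) simp
  then show ?thesis
    using True assms(3) by (auto simp: multi_transvection_def subst_letter_def)
qed (use assms in \<open>simp add: multi_transvection_def subst_letter_def\<close>)

lemma multi_transvection_iso:
  assumes "sym E" "U \<subseteq> V" "g ` U \<subseteq> V"
    and "\<And>a b. a \<in> U \<Longrightarrow> b \<in> U \<Longrightarrow> (a, b) \<notin> E"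
    and "\<And>a. a \<in> U \<Longrightarrow> lk E a \<subseteq> st E (g a)" "\<And>a. a \<in> U \<Longrightarrow> g a \<notin> U"
  shows "subst_hom V E (multi_transvection U g True) \<in> iso (raag V E) (raag V E)"
proof -
  have subst: "raag_substitution V E V E (multi_transvection U g s)" for s
    using assms(1-5) by (rule raag_substitution_multi_transvection)
  show ?thesis
  proof (rule subst_hom_iso[OF subst subst])
    show "raag_eq V E (subst_word (multi_transvection U g False) (multi_transvection U g True a)) [(a, True)]"
      if "a \<in> V" for a
      using raag_eq_multi_transvection_inverse[OF assms(2,3,6) that, of E True] by simp
    show "raag_eq V E (subst_word (multi_transvection U g True) (multi_transvection U g False a)) [(a, True)]"
      if "a \<in> V" for a
      using raag_eq_multi_transvection_inverse[OF assms(2,3,6) that, of E False] by simp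
  qed
qed

section \<open>Exponent sums\<close>

definition letter_sign :: "bool \<Rightarrow> int" where
  "letter_sign s = (if s then 1 else -1)"

definition exponent_sum :: "'a word \<Rightarrow> 'a \<Rightarrow> int" where
  "exponent_sum w a = sum_list (map (\<lambda>(b, s). if b = a then letter_sign s else 0) w)"

lemma exponent_sum_simps [simp]:
  "exponent_sum [] a = 0"
  "exponent_sum ((b, s) # w) a = (if b = a then letter_sign s else 0) + exponent_sum w a"
  "exponent_sum (xs @ ys) a = exponent_sum xs a + exponent_sum ys a"
  by (auto simp: exponent_sum_def)

lemma exponent_sum_raag_eq: "raag_eq V E w w' \<Longrightarrow> exponent_sum w a = exponent_sum w' a"
  by (induction rule: raag_eq.induct) (auto simp: letter_sign_def)

fun ordered_pair_count :: "'a \<Rightarrow> 'a \<Rightarrow> 'a word \<Rightarrow> int" where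
  "ordered_pair_count a b [] = 0"
| "ordered_pair_count a b ((c, s) # w) =
     (if c = a then letter_sign s * exponent_sum w b else 0) + ordered_pair_count a b w"

lemma ordered_pair_count_append [simp]:
  "ordered_pair_count a b (xs @ ys) =
     ordered_pair_count a b xs + ordered_pair_count a b ys + exponent_sum xs a * exponent_sum ys b"
  by (induction xs rule: ordered_pair_count.induct) (auto simp: algebra_simps)

lemma ordered_pair_count_raag_eq:
  assumes "a \<noteq> b" "(a, b) \<notin> E" "(b, a) \<notin> E"
  shows "raag_eq V E w w' \<Longrightarrow> ordered_pair_count a b w = ordered_pair_count a b w'"
proof (induction rule: raag_eq.induct)
  case (cancel xs ys c s)
  then show ?case using assms by (auto simp: letter_sign_def)
next
  case (commute xs ys c d s t)
  then show ?case using assms by (auto simp: algebra_simps)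
qed auto

definition raag_exponent :: "'a word set \<Rightarrow> 'a \<Rightarrow> int" where
  "raag_exponent X = exponent_sum (rep X)"

lemma raag_exponent_raag_class:
  assumes "w \<in> lists (V \<times> UNIV)"
  shows "raag_exponent (raag_class V E w) = exponent_sum w"
  using exponent_sum_raag_eq[OF raag_eq_rep_raag_class[OF assms]] by (simp add: raag_exponent_def fun_eq_iff)

definition commuting_exponents :: "('a \<times> 'a) set \<Rightarrow> ('a \<Rightarrow> int) \<Rightarrow> ('a \<Rightarrow> int) \<Rightarrow> bool" where
  "commuting_exponents E x y \<longleftrightarrow> (\<forall>a b. a \<noteq> b \<longrightarrow> (a, b) \<notin> E \<longrightarrow> x a * y b = y a * x b)"

lemma commuting_exponents_if_commute:
  assumes "sym E" "X \<in> carrier (raag V E)" "Y \<in> carrier (raag V E)"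
    and "X \<otimes>\<^bsub>raag V E\<^esub> Y = Y \<otimes>\<^bsub>raag V E\<^esub> X"
  shows "commuting_exponents E (raag_exponent X) (raag_exponent Y)"
  unfolding commuting_exponents_def
proof (intro allI impI)
  fix a b
  assume ab: "a \<noteq> b" "(a, b) \<notin> E"
  have ba: "(b, a) \<notin> E"
    using ab(2) assms(1) by (auto dest: symD)
  have "raag_class V E (rep X @ rep Y) = raag_class V E (rep Y @ rep X)"
    using assms(4) by (simp add: raag_def)
  then have "raag_eq V E (rep X @ rep Y) (rep Y @ rep X)"
    using assms(2,3) by (simp add: raag_class_eq_iff rep_in_lists)
  then have "ordered_pair_count a b (rep X @ rep Y) = ordered_pair_count a b (rep Y @ rep X)"
    by (rule ordered_pair_count_raag_eq[OF ab ba])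
  then show "raag_exponent X a * raag_exponent Y b = raag_exponent Y a * raag_exponent X b"
    by (simp add: raag_exponent_def)
qed

lemma commuting_exponents_hom_generators:
  assumes "sym E'" "F \<in> hom (raag V E) (raag V' E')" "(a, b) \<in> E" "a \<in> V" "b \<in> V"
  shows "commuting_exponents E' (raag_exponent (F (raag_class V E [(a, True)])))
    (raag_exponent (F (raag_class V E [(b, True)])))"
proof -
  let ?a = "raag_class V E [(a, True)]" and ?b = "raag_class V E [(b, True)]"
  have carrier: "?a \<in> carrier (raag V E)" "?b \<in> carrier (raag V E)"
    using assms(4,5) by (simp_all add: raag_class_in_carrier)
  have "F ?a \<otimes>\<^bsub>raag V' E'\<^esub> F ?b = F (?a \<otimes>\<^bsub>raag V E\<^esub> ?b)"
    using hom_mult[OF assms(2) carrier] by simp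
  also have "\<dots> = F (?b \<otimes>\<^bsub>raag V E\<^esub> ?a)"
    using raag_generators_commute[OF assms(3-5)] by simp
  also have "\<dots> = F ?b \<otimes>\<^bsub>raag V' E'\<^esub> F ?a"
    using hom_mult[OF assms(2) carrier(2,1)] by simp
  finally show ?thesis
    using carrier hom_in_carrier[OF assms(2)] by (intro commuting_exponents_if_commute[OF assms(1)])
qed

definition fiber :: "'b set \<Rightarrow> ('b \<Rightarrow> 'a) \<Rightarrow> 'a \<Rightarrow> 'b set" where
  "fiber V \<phi> t = {a \<in> V. \<phi> a = t}"

lemma exponent_sum_map:
  fixes \<phi> :: "'b \<Rightarrow> 'a" and w :: "'b word"
  assumes "finite V" "w \<in> lists (V \<times> UNIV)"
  shows "exponent_sum (map (\<lambda>(a, s). (\<phi> a, s)) w) t = (\<Sum>b\<in>fiber V \<phi> t. exponent_sum w b)"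
  using assms(2)
proof induction
  case (Cons l w)
  obtain a s where l: "l = (a, s)" by fastforce
  have "a \<in> V" using Cons l by auto
  have "(\<Sum>b\<in>fiber V \<phi> t. exponent_sum (l # w) b) =
      (\<Sum>b\<in>fiber V \<phi> t. if a = b then letter_sign s else 0) + (\<Sum>b\<in>fiber V \<phi> t. exponent_sum w b)"
    unfolding l by (simp add: sum.distrib)
  also have "(\<Sum>b\<in>fiber V \<phi> t. if a = b then letter_sign s else 0) = (if \<phi> a = t then letter_sign s else 0)"
    using assms(1) \<open>a \<in> V\<close> by (simp add: fiber_def)
  finally show ?case
    using Cons.IH l by simp
qed simp

lemma raag_exponent_induced_hom:
  assumes "finite V" "\<phi> ` V \<subseteq> V'" "X \<in> carrier (raag V E)"
  shows "raag_exponent (induced_hom V' E' \<phi> X) t = (\<Sum>b\<in>fiber V \<phi> t. raag_exponent X b)"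
proof -
  have "map (\<lambda>(a, s). (\<phi> a, s)) (rep X) \<in> lists (V' \<times> UNIV)"
    using rep_in_lists[OF assms(3)] assms(2) by (fastforce simp: mem_Times_iff)
  then have "raag_exponent (induced_hom V' E' \<phi> X) t = exponent_sum (map (\<lambda>(a, s). (\<phi> a, s)) (rep X)) t"
    unfolding induced_hom_def by (simp add: raag_exponent_raag_class)
  also have "\<dots> = (\<Sum>b\<in>fiber V \<phi> t. exponent_sum (rep X) b)"
    using assms(1) rep_in_lists[OF assms(3)] by (rule exponent_sum_map)
  finally show ?thesis
    by (simp add: raag_exponent_def)
qed

section \<open>Covering maps\<close>

locale graph_cover =
  fixes VL :: "'b set" and EL :: "('b \<times> 'b) set"
    and VG :: "'a set" and EG :: "('a \<times> 'a) set" and \<phi> :: "'b \<Rightarrow> 'a"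
  assumes simplicial_source: "simplicial_graph VL EL"
    and simplicial_target: "simplicial_graph VG EG"
    and covering: "covering_map VL EL VG EG \<phi>"
begin

lemma finite_source: "finite VL"
  using simplicial_source by (simp add: simplicial_graph_def)

lemma edge_source_vertices: "(a, b) \<in> EL \<Longrightarrow> a \<in> VL \<and> b \<in> VL"
  using simplicial_source by (auto simp: simplicial_graph_def)

lemma sym_source: "sym EL"
  using simplicial_source by (simp add: simplicial_graph_def)

lemma image_source: "\<phi> ` VL = VG"
  using covering by (simp add: covering_map_def)

lemma edge_image: "(a, b) \<in> EL \<Longrightarrow> (\<phi> a, \<phi> b) \<in> EG"
  using covering by (simp add: covering_map_def)

lemma bij_betw_lk: "u \<in> VL \<Longrightarrow> bij_betw \<phi> (lk EL u) (lk EG (\<phi> u))"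
  using covering by (simp add: covering_map_def)

lemma no_edge_in_fiber: "\<phi> a = \<phi> b \<Longrightarrow> (a, b) \<notin> EL"
  using simplicial_target edge_image by (fastforce simp: simplicial_graph_def irrefl_def)

lemma induced_substitution: "raag_substitution VL EL VG EG (\<lambda>a. [(\<phi> a, True)])"
  using image_source edge_image by (intro raag_substitution_graph_hom) auto

lemma transvection_substitution:
  assumes "v \<in> VG" "v' \<in> VG" "lk EG v \<subseteq> st EG v'"
  shows "raag_substitution VG EG VG EG (multi_transvection {v} (\<lambda>_. v') True)"
  using simplicial_target assms
  by (intro raag_substitution_multi_transvection) (auto simp: simplicial_graph_def irrefl_def)

lemma in_lk_if_commuting_exponents:
  fixes x y :: "'b \<Rightarrow> int"
  assumes "u0 \<in> VL" "x u0 \<noteq> 0"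
    and "sum x (fiber VL \<phi> (\<phi> u0)) = 1" "sum y (fiber VL \<phi> (\<phi> u0)) = 0"
    and "commuting_exponents EL x y" "y a \<noteq> 0"
  shows "a \<in> lk EL u0"
proof -
  let ?F = "fiber VL \<phi> (\<phi> u0)"
  have "x u0 * y b - y u0 * x b = 0" if "b \<in> ?F" for b
    using that assms(5) no_edge_in_fiber[of u0 b]
    by (cases "b = u0") (auto simp: fiber_def commuting_exponents_def)
  then have "0 = (\<Sum>b\<in>?F. x u0 * y b - y u0 * x b)"
    by simp
  also have "\<dots> = x u0 * sum y ?F - y u0 * sum x ?F"
    by (simp add: sum_subtractf sum_distrib_left)
  finally have "y u0 = 0"
    using assms(3,4) by simp
  show ?thesis
  proof (rule ccontr)
    assume "a \<notin> lk EL u0"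
    moreover have "u0 \<noteq> a"
      using assms(6) \<open>y u0 = 0\<close> by auto
    ultimately have "x u0 * y a = y u0 * x a"
      using assms(5) by (simp add: commuting_exponents_def lk_def)
    then show False
      using assms(2,6) \<open>y u0 = 0\<close> by simp
  qed
qed

lemma sum_fiber_if_support_in_lk:
  assumes "u0 \<in> VL" "\<And>b. y b \<noteq> 0 \<Longrightarrow> b \<in> lk EL u0" "c \<in> lk EL u0"
  shows "sum y (fiber VL \<phi> (\<phi> c)) = y c"
proof -
  have c: "c \<in> fiber VL \<phi> (\<phi> c)"
    using assms(3) edge_source_vertices by (auto simp: fiber_def lk_def)
  have "inj_on \<phi> (lk EL u0)"
    using bij_betw_lk[OF assms(1)] by (simp add: bij_betw_def)
  then have "y b = 0" if "b \<in> fiber VL \<phi> (\<phi> c) - {c}" for b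
    using that assms(2,3) by (auto simp: fiber_def dest: inj_onD)
  then show ?thesis
    using sum.remove[OF _ c, of y] finite_source by (simp add: fiber_def)
qed

lemma in_st_if_commuting_exponents:
  fixes x y :: "'b \<Rightarrow> int"
  assumes u0: "u0 \<in> VL" "x u0 \<noteq> 0" "sum x (fiber VL \<phi> (\<phi> u0)) = 1"
    and "x u1 \<noteq> 0" and c: "c \<in> lk EL u0"
    and y: "\<And>s. sum y (fiber VL \<phi> s) = (if s = \<phi> c then 1 else 0)"
    and comm: "commuting_exponents EL x y"
  shows "c \<in> st EL u1"
proof (rule ccontr)
  assume c_u1: "c \<notin> st EL u1"
  have "\<phi> c \<noteq> \<phi> u0"
    using c no_edge_in_fiber by (auto simp: lk_def)
  then have supp: "b \<in> lk EL u0" if "y b \<noteq> 0" for b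
    using in_lk_if_commuting_exponents[OF u0 _ comm that] y[of "\<phi> u0"] by simp
  have "y c = 1"
    using sum_fiber_if_support_in_lk[where y = y, OF u0(1) supp c] y[of "\<phi> c"] by simp
  have "y u1 = 0"
  proof (rule ccontr)
    assume "y u1 \<noteq> 0"
    then have "u1 \<in> lk EL u0"
      by (rule supp)
    moreover have "u1 \<noteq> c"
      using c_u1 by (auto simp: st_def)
    ultimately have "\<phi> u1 \<noteq> \<phi> c"
      using bij_betw_lk[OF u0(1)] c by (auto simp: bij_betw_def dest: inj_onD)
    then show False
      using sum_fiber_if_support_in_lk[where y = y, OF u0(1) supp \<open>u1 \<in> lk EL u0\<close>] y[of "\<phi> u1"]
        \<open>y u1 \<noteq> 0\<close> by simp
  qed
  have "u1 \<noteq> c" "(u1, c) \<notin> EL"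
    using c_u1 by (auto simp: st_def lk_def)
  then have "x u1 * y c = y u1 * x c"
    using comm by (simp add: commuting_exponents_def)
  then show False
    using \<open>y c = 1\<close> \<open>y u1 = 0\<close> \<open>x u1 \<noteq> 0\<close> by simp
qed

lemma lk_subset_st_if_commuting_exponents:
  fixes x :: "'b \<Rightarrow> int"
  assumes "sum x (fiber VL \<phi> v) = 1" "sum x (fiber VL \<phi> v') = 1"
    and ys: "\<And>t. t \<in> lk EG v \<Longrightarrow> \<exists>y. (\<forall>s. sum y (fiber VL \<phi> s) = (if s = t then 1 else 0))
                                         \<and> commuting_exponents EL x y"
  shows "\<exists>u0\<in>fiber VL \<phi> v. \<exists>u1\<in>fiber VL \<phi> v'. lk EL u0 \<subseteq> st EL u1"
proof -
  have "sum x (fiber VL \<phi> v) \<noteq> 0" "sum x (fiber VL \<phi> v') \<noteq> 0"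
    using assms(1,2) by simp_all
  then obtain u0 u1 where u0: "u0 \<in> fiber VL \<phi> v" "x u0 \<noteq> 0" and u1: "u1 \<in> fiber VL \<phi> v'" "x u1 \<noteq> 0"
    by (meson sum.not_neutral_contains_not_neutral)
  have "c \<in> st EL u1" if c: "c \<in> lk EL u0" for c
  proof -
    have "\<phi> c \<in> lk EG v"
      using c u0(1) edge_image by (auto simp: lk_def fiber_def)
    then obtain y where "\<And>s. sum y (fiber VL \<phi> s) = (if s = \<phi> c then 1 else 0)"
      and "commuting_exponents EL x y"
      using ys by blast
    then show ?thesis
      using in_st_if_commuting_exponents[of u0 x u1 c y] u0 u1(2) c assms(1)
      by (simp add: fiber_def)
  qed
  then show ?thesis
    using u0(1) u1(1) by blast
qed

lemma deck_lk:
  assumes "\<mu> \<in> deck VL EL \<phi>" "a \<in> VL"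
  shows "lk EL (\<mu> a) = \<mu> ` lk EL a"
proof
  have bij: "bij_betw \<mu> VL VL"
    and edges: "\<And>x y. x \<in> VL \<Longrightarrow> y \<in> VL \<Longrightarrow> (x, y) \<in> EL \<longleftrightarrow> (\<mu> x, \<mu> y) \<in> EL"
    using assms(1) by (auto simp: deck_def)
  show "lk EL (\<mu> a) \<subseteq> \<mu> ` lk EL a"
  proof
    fix c
    assume "c \<in> lk EL (\<mu> a)"
    then obtain c0 where "c0 \<in> VL" "c = \<mu> c0" "(\<mu> a, \<mu> c0) \<in> EL"
      using bij edge_source_vertices by (fastforce simp: lk_def bij_betw_def)
    then show "c \<in> \<mu> ` lk EL a"
      using edges[OF assms(2) \<open>c0 \<in> VL\<close>] by (simp add: lk_def)
  qed
  show "\<mu> ` lk EL a \<subseteq> lk EL (\<mu> a)"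
  proof
    fix c
    assume "c \<in> \<mu> ` lk EL a"
    then obtain c0 where "c = \<mu> c0" "(a, c0) \<in> EL"
      by (auto simp: lk_def)
    then show "c \<in> lk EL (\<mu> a)"
      using edges[OF assms(2)] edge_source_vertices by (auto simp: lk_def)
  qed
qed

lemma phi_le_if_lk_subset_st:
  assumes "regular_covering_map VL EL VG EG \<phi>" "u0 \<in> VL" "u1 \<in> VL" "lk EL u0 \<subseteq> st EL u1"
  shows "phi_le VL EL \<phi> (\<phi> u0) (\<phi> u1)"
  unfolding phi_le_def
proof (intro ballI impI)
  fix u
  assume "u \<in> VL" "\<phi> u = \<phi> u0"
  then obtain \<mu> where \<mu>: "\<mu> \<in> deck VL EL \<phi>" "\<mu> u0 = u"
    using assms(1,2) unfolding regular_covering_map_def by metis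
  then have "\<mu> u1 \<in> VL" "\<phi> (\<mu> u1) = \<phi> u1"
    using assms(3) by (auto simp: deck_def bij_betw_def)
  moreover have "lk EL u \<subseteq> st EL (\<mu> u1)"
    using deck_lk[OF \<mu>(1) assms(2)] deck_lk[OF \<mu>(1) assms(3)] assms(4) \<mu>(2)
    by (auto simp: st_def)
  ultimately show "\<exists>u'\<in>VL. \<phi> u' = \<phi> u1 \<and> lk EL u \<subseteq> st EL u'"
    by blast
qed

lemma sum_fiber_exponent_lifted_generator:
  assumes "v \<in> VG" "v' \<in> VG" "lk EG v \<subseteq> st EG v'"
    and F: "F \<in> hom (raag VL EL) (raag VL EL)"
    and lift: "\<forall>X\<in>carrier (raag VL EL).
      transvection VG EG v v' (induced_hom VG EG \<phi> X) = induced_hom VG EG \<phi> (F X)"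
    and a: "a \<in> VL"
  shows "sum (raag_exponent (F (raag_class VL EL [(a, True)]))) (fiber VL \<phi> t) =
    exponent_sum (multi_transvection {v} (\<lambda>_. v') True (\<phi> a)) t"
proof -
  let ?\<tau> = "multi_transvection {v} (\<lambda>_. v') True" and ?a = "raag_class VL EL [(a, True)]"
  have \<tau>: "raag_substitution VG EG VG EG ?\<tau>"
    using assms(1-3) by (rule transvection_substitution)
  have "?a \<in> carrier (raag VL EL)" "\<phi> a \<in> VG"
    using a image_source by (auto simp: raag_class_in_carrier)
  have "sum (raag_exponent (F ?a)) (fiber VL \<phi> t) = raag_exponent (induced_hom VG EG \<phi> (F ?a)) t"
    using raag_exponent_induced_hom[OF finite_source equalityD1[OF image_source]]
      hom_in_carrier[OF F \<open>?a \<in> carrier (raag VL EL)\<close>] by simp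
  also have "induced_hom VG EG \<phi> (F ?a) = transvection VG EG v v' (induced_hom VG EG \<phi> ?a)"
    using lift \<open>?a \<in> carrier (raag VL EL)\<close> by simp
  also have "\<dots> = raag_class VG EG (?\<tau> (\<phi> a))"
    using raag_substitution.subst_hom_generator[OF induced_substitution a]
      raag_substitution.subst_hom_generator[OF \<tau> \<open>\<phi> a \<in> VG\<close>]
    by (simp add: induced_hom_eq_subst_hom transvection_eq_subst_hom)
  also have "raag_exponent \<dots> t = exponent_sum (?\<tau> (\<phi> a)) t"
    using \<open>\<phi> a \<in> VG\<close> by (simp add: raag_exponent_raag_class raag_substitution.subst_in_lists[OF \<tau>])
  finally show ?thesis .
qed

lemma phi_le_if_liftable_transvection:
  assumes "regular_covering_map VL EL VG EG \<phi>"
    and "v \<in> VG" "v' \<in> VG" "v \<noteq> v'" "lk EG v \<subseteq> st EG v'"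
    and "liftable VL EL VG EG \<phi> (transvection VG EG v v')"
  shows "phi_le VL EL \<phi> v v'"
proof -
  obtain F where F: "F \<in> hom (raag VL EL) (raag VL EL)"
    and lift: "\<forall>X\<in>carrier (raag VL EL).
      transvection VG EG v v' (induced_hom VG EG \<phi> X) = induced_hom VG EG \<phi> (F X)"
    using assms(6) by (auto simp: liftable_def iso_def)
  define e where "e a = raag_exponent (F (raag_class VL EL [(a, True)]))" for a
  have e_fiber: "sum (e a) (fiber VL \<phi> t) = exponent_sum (multi_transvection {v} (\<lambda>_. v') True (\<phi> a)) t"
    if "a \<in> VL" for a t
    unfolding e_def using assms(2,3,5) F lift that by (rule sum_fiber_exponent_lifted_generator)
  have e_comm: "commuting_exponents EL (e a) (e b)" if "(a, b) \<in> EL" for a b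
    unfolding e_def using sym_source F that edge_source_vertices[OF that]
    by (intro commuting_exponents_hom_generators) auto
  obtain u where u: "u \<in> VL" "\<phi> u = v"
    using image_source assms(2) by auto
  have "\<exists>u0\<in>fiber VL \<phi> v. \<exists>u1\<in>fiber VL \<phi> v'. lk EL u0 \<subseteq> st EL u1"
  proof (rule lk_subset_st_if_commuting_exponents)
    show "sum (e u) (fiber VL \<phi> v) = 1" "sum (e u) (fiber VL \<phi> v') = 1"
      using e_fiber[OF u(1)] u(2) assms(4) by (simp_all add: multi_transvection_def letter_sign_def)
  next
    fix t
    assume "t \<in> lk EG v"
    then have "t \<in> \<phi> ` lk EL u"
      using bij_betw_lk[OF u(1)] u(2) by (simp add: bij_betw_def)
    then obtain w where w: "(u, w) \<in> EL" "\<phi> w = t"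
      by (auto simp: lk_def)
    then have "w \<in> VL" "t \<noteq> v"
      using u edge_source_vertices no_edge_in_fiber by auto
    then show "\<exists>y. (\<forall>s. sum y (fiber VL \<phi> s) = (if s = t then 1 else 0)) \<and> commuting_exponents EL (e u) y"
      using e_fiber[of w] e_comm[OF w(1)] w(2)
      by (intro exI[of _ "e w"]) (auto simp: multi_transvection_def letter_sign_def)
  qed
  then show ?thesis
    using phi_le_if_lk_subset_st[OF assms(1)] by (auto simp: fiber_def)
qed

lemma multi_transvection_fiber_iso:
  assumes "v \<noteq> v'" and g: "\<And>u. u \<in> fiber VL \<phi> v \<Longrightarrow> g u \<in> fiber VL \<phi> v' \<and> lk EL u \<subseteq> st EL (g u)"
  shows "subst_hom VL EL (multi_transvection (fiber VL \<phi> v) g True) \<in> iso (raag VL EL) (raag VL EL)"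
proof (rule multi_transvection_iso[OF sym_source])
  show "fiber VL \<phi> v \<subseteq> VL" "g ` fiber VL \<phi> v \<subseteq> VL"
    using g by (auto simp: fiber_def)
  show "(a, b) \<notin> EL" if "a \<in> fiber VL \<phi> v" "b \<in> fiber VL \<phi> v" for a b
    using that no_edge_in_fiber by (simp add: fiber_def)
  show "lk EL a \<subseteq> st EL (g a)" "g a \<notin> fiber VL \<phi> v" if "a \<in> fiber VL \<phi> v" for a
    using g[OF that] assms(1) by (auto simp: fiber_def)
qed

lemma transvection_induced_hom_multi_transvection:
  assumes "v \<in> VG" "v' \<in> VG" "lk EG v \<subseteq> st EG v'"
    and g: "\<And>u. u \<in> fiber VL \<phi> v \<Longrightarrow> g u \<in> fiber VL \<phi> v'"
    and X: "X \<in> carrier (raag VL EL)"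
  shows "transvection VG EG v v' (induced_hom VG EG \<phi> X) =
    induced_hom VG EG \<phi> (subst_hom VL EL (multi_transvection (fiber VL \<phi> v) g True) X)"
proof -
  define \<sigma> where "\<sigma> = multi_transvection (fiber VL \<phi> v) g True"
  define \<tau> where "\<tau> = multi_transvection {v} (\<lambda>_. v') True"
  have \<tau>: "raag_substitution VG EG VG EG \<tau>"
    unfolding \<tau>_def using assms(1-3) by (rule transvection_substitution)
  have \<phi>_lists: "[(\<phi> a, True)] \<in> lists (VG \<times> UNIV)" if "a \<in> VL" for a
    using image_source that by auto
  have \<sigma>_lists: "\<sigma> a \<in> lists (VL \<times> UNIV)" if "a \<in> VL" for a
    using g that by (auto simp: \<sigma>_def multi_transvection_def fiber_def)
  have \<tau>_\<phi>: "subst_word \<tau> [(\<phi> a, True)] = subst_word (\<lambda>a. [(\<phi> a, True)]) (\<sigma> a)" if "a \<in> VL" for a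
    using g[of a] that by (auto simp: \<sigma>_def \<tau>_def multi_transvection_def subst_letter_def fiber_def)
  have "transvection VG EG v v' (induced_hom VG EG \<phi> X) =
      subst_hom VG EG \<tau> (subst_hom VG EG (\<lambda>a. [(\<phi> a, True)]) X)"
    by (simp add: transvection_eq_subst_hom induced_hom_eq_subst_hom \<tau>_def)
  also have "\<dots> = subst_hom VG EG (\<lambda>a. subst_word \<tau> [(\<phi> a, True)]) X"
    by (rule subst_hom_subst_hom[OF \<tau> X \<phi>_lists])
  also have "\<dots> = subst_hom VG EG (\<lambda>a. subst_word (\<lambda>a. [(\<phi> a, True)]) (\<sigma> a)) X"
    by (rule subst_hom_cong[OF X \<tau>_\<phi>])
  also have "\<dots> = subst_hom VG EG (\<lambda>a. [(\<phi> a, True)]) (subst_hom VL EL \<sigma> X)"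
    by (rule subst_hom_subst_hom[OF induced_substitution X \<sigma>_lists, symmetric])
  finally show ?thesis
    by (simp add: induced_hom_eq_subst_hom \<sigma>_def)
qed

lemma liftable_transvection_if_phi_le:
  assumes "v \<in> VG" "v' \<in> VG" "v \<noteq> v'" "lk EG v \<subseteq> st EG v'" "phi_le VL EL \<phi> v v'"
  shows "liftable VL EL VG EG \<phi> (transvection VG EG v v')"
proof -
  have "\<forall>u\<in>fiber VL \<phi> v. \<exists>u'. u' \<in> fiber VL \<phi> v' \<and> lk EL u \<subseteq> st EL u'"
    using assms(5) by (auto simp: phi_le_def fiber_def)
  then obtain g where g: "\<And>u. u \<in> fiber VL \<phi> v \<Longrightarrow> g u \<in> fiber VL \<phi> v' \<and> lk EL u \<subseteq> st EL (g u)"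
    by (metis bchoice)
  then have "\<forall>X\<in>carrier (raag VL EL). transvection VG EG v v' (induced_hom VG EG \<phi> X) =
      induced_hom VG EG \<phi> (subst_hom VL EL (multi_transvection (fiber VL \<phi> v) g True) X)"
    using transvection_induced_hom_multi_transvection[OF assms(1,2,4)] by blast
  then show ?thesis
    unfolding liftable_def using multi_transvection_fiber_iso[OF assms(3) g] by blast
qed

end

theorem corollary8p4:
  fixes VL :: "'b set" and EL :: "('b \<times> 'b) set"
    and VG :: "'a set" and EG :: "('a \<times> 'a) set"
    and \<phi> :: "'b \<Rightarrow> 'a" and v v' :: 'a
  assumes "simplicial_graph VL EL" and "no_isolated_vertices VL EL"
    and "simplicial_graph VG EG" and "no_isolated_vertices VG EG"
    and "regular_covering_map VL EL VG EG \<phi>"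
    and "v \<in> VG" and "v' \<in> VG" and "v \<noteq> v'"
    and "lk EG v \<subseteq> st EG v'"
  shows "liftable VL EL VG EG \<phi> (transvection VG EG v v') \<longleftrightarrow> phi_le VL EL \<phi> v v'"
proof -
  interpret graph_cover VL EL VG EG \<phi>
    using assms(1,3,5) by unfold_locales (simp_all add: regular_covering_map_def)
  show ?thesis
    using phi_le_if_liftable_transvection[OF assms(5-9)] liftable_transvection_if_phi_le[OF assms(6-9)]
    by blast
qed

end
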